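(* There exist a financial system $S$ in the base model (all contracts of the same priority), a bank $v$ and a number $x>0$ such that: $S$ has exactly two solutions $r_1\neq r_2$, with $q_v(r_2)=0$; and the system $S'$ obtained from $S$ by replacing $e_v$ with $e_v+x$ (everything else unchanged) has exactly one solution $r'$, which satisfies $r'=r_1$ and $q'_v(r')>x$, where $q'_v$ is the payoff of $v$ in $S'$.
   Context: A financial system with payment priorities consists of: a finite set $V$ of banks; external assets $e_v\ge 0$ for each $v\in V$; a number $P\ge 1$ of priority levels; and a finite set of contracts, each of which is either a debt contract from a debtor $u$ to a creditor $v\neq u$ with weight $c>0$, or a credit default swap (CDS) from a debtor $u$ to a creditor $v\neq u$ in reference to a bank $w\notin\{u,v\}$ (the reference entity) with weight $c>0$. Every contract has a priority in $\{1,\dots,P\}$ (1 is the highest priority). It is assumed that every bank that is the reference entity of some CDS is the debtor of at least one debt contract of positive weight. Given a recovery rate vector $r\in[0,1]^V$: the liability of a contract $k$ is $l_k(r)=c$ if $k$ is a debt of weight $c$, and $l_k(r)=c\,(1-r_w)$ if $k$ is a CDS of weight $c$ in reference to $w$. For a bank $v$, $l_v(r)$ is the sum of the liabilities of the contracts with debtor $v$; $l_v^{(\rho)}(r)$ is the sum of the liabilities of contracts with debtor $v$ and priority $\rho$; and $l_v^{(\le\rho)}(r)=\sum_{i=1}^{\rho}l_v^{(i)}(r)$ (with $l_v^{(\le 0)}=0$). The payment on a contract $k$ with debtor $v$ and priority $\rho$ is $p_k(r)=l_k(r)\cdot\min\{1,\max\{0,(r_v l_v(r)-l_v^{(\le\rho-1)}(r))/l_v^{(\rho)}(r)\}\}$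 (and $p_k(r)=0$ if $l_v^{(\rho)}(r)=0$). The assets of $v$ are $a_v(r)=e_v+\sum_k p_k(r)$, summing over contracts $k$ with creditor $v$. A vector $r\in[0,1]^V$ is a solution (clearing vector) if for every $v\in V$: $r_v=1$ when $a_v(r)\ge l_v(r)$, and $r_v=a_v(r)/l_v(r)$ when $a_v(r)<l_v(r)$. The payoff of $v$ is $q_v(r)=\max\{a_v(r)-l_v(r),0\}$. When $P=1$, payments reduce to $p_k(r)=r_v\,l_k(r)$ (principle of proportionality); this is called the base model. *)

theory Defs
  imports Main "HOL-Library.Extended_Real" Complex_Main
begin

text \<open>Banks are natural numbers. A contract is either a debt
  (debtor, creditor, weight, priority) or a CDS
  (debtor, creditor, reference entity, weight, priority).\<close>

datatype contract =
    Debt nat nat real nat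
  | CDS nat nat nat real nat

fun debtor :: "contract \<Rightarrow> nat" where
  "debtor (Debt u v c \<rho>) = u"
| "debtor (CDS u v w c \<rho>) = u"

fun creditor :: "contract \<Rightarrow> nat" where
  "creditor (Debt u v c \<rho>) = v"
| "creditor (CDS u v w c \<rho>) = v"

fun weight :: "contract \<Rightarrow> real" where
  "weight (Debt u v c \<rho>) = c"
| "weight (CDS u v w c \<rho>) = c"

fun priority :: "contract \<Rightarrow> nat" where
  "priority (Debt u v c \<rho>) = \<rho>"
| "priority (CDS u v w c \<rho>) = \<rho>"

record fin_system =
  banks :: "nat set"
  ext :: "nat \<Rightarrow> real"
  levels :: nat
  contracts :: "contract set"

fun contract_wf :: "fin_system \<Rightarrow> contract \<Rightarrow> bool" where
  "contract_wf S (Debt u v c \<rho>) \<longleftrightarrow>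
     u \<in> banks S \<and> v \<in> banks S \<and> u \<noteq> v \<and> c > 0 \<and> 1 \<le> \<rho> \<and> \<rho> \<le> levels S"
| "contract_wf S (CDS u v w c \<rho>) \<longleftrightarrow>
     u \<in> banks S \<and> v \<in> banks S \<and> w \<in> banks S \<and> u \<noteq> v \<and> w \<noteq> u \<and> w \<noteq> v
     \<and> c > 0 \<and> 1 \<le> \<rho> \<and> \<rho> \<le> levels S
     \<and> (\<exists>k\<in>contracts S. \<exists>v' c' \<rho>'. k = Debt w v' c' \<rho>' \<and> c' > 0)"

definition wf_system :: "fin_system \<Rightarrow> bool" where
  "wf_system S \<longleftrightarrow> finite (banks S) \<and> (\<forall>v\<in>banks S. ext S v \<ge> 0) \<and> levels S \<ge> 1
     \<and> finite (contracts S) \<and> (\<forall>k\<in>contracts S. contract_wf S k)"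

definition base_model :: "fin_system \<Rightarrow> bool" where
  "base_model S \<longleftrightarrow> wf_system S \<and> levels S = 1"

fun liab :: "(nat \<Rightarrow> real) \<Rightarrow> contract \<Rightarrow> real" where
  "liab r (Debt u v c \<rho>) = c"
| "liab r (CDS u v w c \<rho>) = c * (1 - r w)"

definition bank_liab :: "fin_system \<Rightarrow> (nat \<Rightarrow> real) \<Rightarrow> nat \<Rightarrow> real" where
  "bank_liab S r v = (\<Sum>k\<in>{k\<in>contracts S. debtor k = v}. liab r k)"

definition bank_liab_prio :: "fin_system \<Rightarrow> (nat \<Rightarrow> real) \<Rightarrow> nat \<Rightarrow> nat \<Rightarrow> real" where
  "bank_liab_prio S r v \<rho> = (\<Sum>k\<in>{k\<in>contracts S. debtor k = v \<and> priority k = \<rho>}. liab r k)"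

definition bank_liab_upto :: "fin_system \<Rightarrow> (nat \<Rightarrow> real) \<Rightarrow> nat \<Rightarrow> nat \<Rightarrow> real" where
  "bank_liab_upto S r v \<rho> = (\<Sum>i=1..\<rho>. bank_liab_prio S r v i)"

definition payment :: "fin_system \<Rightarrow> (nat \<Rightarrow> real) \<Rightarrow> contract \<Rightarrow> real" where
  "payment S r k =
    (let v = debtor k; \<rho> = priority k in
     if bank_liab_prio S r v \<rho> = 0 then 0
     else liab r k * min 1 (max 0 ((r v * bank_liab S r v - bank_liab_upto S r v (\<rho> - 1))
                                   / bank_liab_prio S r v \<rho>)))"

definition assets :: "fin_system \<Rightarrow> (nat \<Rightarrow> real) \<Rightarrow> nat \<Rightarrow> real" where
  "assets S r v = ext S v + (\<Sum>k\<in>{k\<in>contracts S. creditor k = v}. payment S r k)"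

text \<open>Clearing vectors: recovery rates in [0,1] on the banks; by convention
  the (irrelevant) value outside the set of banks is fixed to 0 so that solutions
  are counted as vectors in [0,1]^V.\<close>
definition solution :: "fin_system \<Rightarrow> (nat \<Rightarrow> real) \<Rightarrow> bool" where
  "solution S r \<longleftrightarrow>
     (\<forall>v. v \<notin> banks S \<longrightarrow> r v = 0) \<and>
     (\<forall>v\<in>banks S. 0 \<le> r v \<and> r v \<le> 1 \<and>
        (assets S r v \<ge> bank_liab S r v \<longrightarrow> r v = 1) \<and>
        (assets S r v < bank_liab S r v \<longrightarrow> r v = assets S r v / bank_liab S r v))"

definition payoff :: "fin_system \<Rightarrow> (nat \<Rightarrow> real) \<Rightarrow> nat \<Rightarrow> real" where
  "payoff S r v = max (assets S r v - bank_liab S r v) 0"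

end

theory Submission imports Defs begin

text \<open>Bank 0 has external assets \<open>a\<close> and owes a debt of 1 to bank 1 and a CDS of weight 3
  on bank 1 to bank 2; bank 1 owes a debt of 1 to bank 2. Bank 1's only income is bank 0's
  payment, so \<open>r\<^sub>1 = r\<^sub>0\<close>, and bank 0's liabilities \<open>1 + 3(1 - r\<^sub>1)\<close> grow with its own default.
  Clearing reduces to \<open>t = min 1 (a / (4 - 3t))\<close> for \<open>t = r\<^sub>0\<close>: either \<open>t = 1\<close> (needing
  \<open>a \<ge> 1\<close>) or \<open>a = t (4 - 3t)\<close> with \<open>t < 1\<close>. At \<open>a = 4/3\<close> the parabola touches this level,
  giving the extra solution \<open>t = 2/3\<close> in which bank 0 has payoff 0. Injecting \<open>x = 1\<close> leaves
  only \<open>t = 1\<close>, where bank 0 keeps \<open>7/3 - 1 = 4/3 > x\<close>: the injection also cancels the CDS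
  liability that bank 0's own default had created.\<close>

lemma Collect_mem_insert:
  "{x \<in> insert a A. P x} = (if P a then insert a {x \<in> A. P x} else {x \<in> A. P x})"
  by auto

lemma clearing_condition_iff_min:
  fixes A L \<rho> :: real
  assumes "0 < L"
  shows "((L \<le> A \<longrightarrow> \<rho> = 1) \<and> (A < L \<longrightarrow> \<rho> = A / L)) \<longleftrightarrow> \<rho> = min 1 (A / L)"
  using assms by (auto simp: min_def field_simps)

lemma payment_single_priority:
  assumes "\<forall>k'\<in>contracts S. priority k' = 1" "k \<in> contracts S"
    and "0 \<le> r (debtor k)" "r (debtor k) \<le> 1" "bank_liab S r (debtor k) \<noteq> 0"
  shows "payment S r k = r (debtor k) * liab r k"
proof -
  have "bank_liab_prio S r (debtor k) 1 = bank_liab S r (debtor k)"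
    unfolding bank_liab_prio_def bank_liab_def using assms(1) by (metis (lifting) mem_Collect_eq)
  moreover have "bank_liab_upto S r (debtor k) 0 = 0"
    by (simp add: bank_liab_upto_def)
  ultimately show ?thesis
    using assms(2-) bspec[OF assms(1,2)] by (simp add: payment_def Let_def)
qed

definition cds_system :: "real \<Rightarrow> fin_system" where
  "cds_system a = \<lparr>banks = {0, 1, 2}, ext = (\<lambda>v. if v = 0 then a else 0), levels = 1,
     contracts = {Debt 0 1 1 1, Debt 1 2 1 1, CDS 0 2 1 3 1}\<rparr>"

definition cds_recovery :: "real \<Rightarrow> nat \<Rightarrow> real" where
  "cds_recovery t = (\<lambda>v. if v \<in> {0, 1} then t else if v = 2 then 1 else 0)"

lemma cds_system_simps:
  "banks (cds_system a) = {0, 1, 2}"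
  "ext (cds_system a) = (\<lambda>v. if v = 0 then a else 0)"
  "contracts (cds_system a) = {Debt 0 1 1 1, Debt 1 2 1 1, CDS 0 2 1 3 1}"
  by (simp_all add: cds_system_def)

lemma base_model_cds_system: "0 \<le> a \<Longrightarrow> base_model (cds_system a)"
  by (auto simp: base_model_def wf_system_def cds_system_def)

lemma ext_update_cds_system:
  "(cds_system a)\<lparr>ext := (ext (cds_system a))(0 := ext (cds_system a) 0 + x)\<rparr> = cds_system (a + x)"
  by (auto simp: cds_system_def)

lemma bank_liab_cds_system:
  "bank_liab (cds_system a) r 0 = 4 - 3 * r 1"
  "bank_liab (cds_system a) r 1 = 1"
  "bank_liab (cds_system a) r 2 = 0"
  unfolding bank_liab_def cds_system_simps Collect_mem_insert by simp_all

lemma priority_cds_system: "\<forall>k\<in>contracts (cds_system a). priority k = 1"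
  by (simp add: cds_system_simps)

lemma assets_cds_system:
  assumes "0 \<le> r 0" "r 0 \<le> 1" "0 \<le> r 1" "r 1 \<le> 1"
  shows "assets (cds_system a) r 0 = a"
    and "assets (cds_system a) r 1 = r 0"
    and "assets (cds_system a) r 2 = r 1 + 3 * (1 - r 1) * r 0"
proof -
  note payment = payment_single_priority[OF priority_cds_system, of _ a r]
  have "payment (cds_system a) r (Debt 0 1 1 1) = r 0"
    using payment[of "Debt 0 1 1 1", unfolded debtor.simps bank_liab_cds_system] assms
    by (simp add: cds_system_simps)
  moreover have "payment (cds_system a) r (Debt 1 2 1 1) = r 1"
    using payment[of "Debt 1 2 1 1", unfolded debtor.simps bank_liab_cds_system] assms
    by (simp add: cds_system_simps)
  moreover have "payment (cds_system a) r (CDS 0 2 1 3 1) = 3 * (1 - r 1) * r 0"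
    using payment[of "CDS 0 2 1 3 1", unfolded debtor.simps bank_liab_cds_system] assms
    by (simp add: cds_system_simps)
  ultimately show "assets (cds_system a) r 0 = a"
    and "assets (cds_system a) r 1 = r 0"
    and "assets (cds_system a) r 2 = r 1 + 3 * (1 - r 1) * r 0"
    unfolding assets_def cds_system_simps Collect_mem_insert by simp_all
qed

lemma cds_recovery_fixed_point_iff:
  fixes a t :: real
  assumes "0 \<le> t" "t \<le> 1"
  shows "t = min 1 (a / (4 - 3 * t)) \<longleftrightarrow> (t = 1 \<and> 1 \<le> a) \<or> (t < 1 \<and> 3 * (t - 2/3)\<^sup>2 = 4/3 - a)"
proof (cases "t = 1")
  case False
  then have "t < 1" "0 < 4 - 3 * t"
    using assms by simp_all
  have "t = min 1 x \<longleftrightarrow> t = x" for x :: real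
    using \<open>t < 1\<close> by (auto simp: min_def)
  then have "t = min 1 (a / (4 - 3 * t)) \<longleftrightarrow> t = a / (4 - 3 * t)" .
  also have "\<dots> \<longleftrightarrow> 3 * (t - 2/3)\<^sup>2 = 4/3 - a"
    using \<open>0 < 4 - 3 * t\<close> by (auto simp: field_simps power2_eq_square)
  finally show ?thesis
    using \<open>t < 1\<close> by simp
qed (simp add: min_def)

lemma solution_cds_system_iff:
  "solution (cds_system a) r \<longleftrightarrow>
     (\<exists>t. 0 \<le> t \<and> t \<le> 1 \<and> t = min 1 (a / (4 - 3 * t)) \<and> r = cds_recovery t)"
  (is "?sol \<longleftrightarrow> ?fix")
proof
  assume ?sol
  then have bounded: "0 \<le> r v \<and> r v \<le> 1" if "v \<in> {0, 1, 2}" for v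
    using that unfolding solution_def cds_system_simps by blast
  from \<open>?sol\<close> have outside: "r v = 0" if "v \<notin> {0, 1, 2}" for v
    using that unfolding solution_def cds_system_simps by blast
  from \<open>?sol\<close> have clearing:
    "(bank_liab (cds_system a) r v \<le> assets (cds_system a) r v \<longrightarrow> r v = 1) \<and>
     (assets (cds_system a) r v < bank_liab (cds_system a) r v \<longrightarrow>
        r v = assets (cds_system a) r v / bank_liab (cds_system a) r v)" if "v \<in> {0, 1, 2}" for v
    using that unfolding solution_def cds_system_simps by blast
  have r0: "0 \<le> r 0" "r 0 \<le> 1" and r1: "0 \<le> r 1" "r 1 \<le> 1"
    using bounded[of 0] bounded[of 1] by simp_all
  note assets = assets_cds_system[OF r0 r1]
  have "r 1 = r 0"
    using clearing[of 1] r0 unfolding assets bank_liab_cds_system by auto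
  moreover have "r 2 = 1"
    using clearing[of 2] r0 r1 unfolding assets bank_liab_cds_system by auto
  moreover have "r 0 = min 1 (a / (4 - 3 * r 1))"
    using clearing[of 0] r1 clearing_condition_iff_min[of "4 - 3 * r 1" a "r 0"]
    unfolding assets bank_liab_cds_system by simp
  ultimately have "r 0 = min 1 (a / (4 - 3 * r 0))" and "r = cds_recovery (r 0)"
    using outside by (auto simp: cds_recovery_def)
  then show ?fix
    using r0 by blast
next
  assume ?fix
  then obtain t where t: "0 \<le> t" "t \<le> 1" "t = min 1 (a / (4 - 3 * t))" and r: "r = cds_recovery t"
    by blast
  have r_values: "r 0 = t" "r 1 = t" "r 2 = 1" "\<And>v. v \<notin> {0, 1, 2} \<Longrightarrow> r v = 0"
    using r by (auto simp: cds_recovery_def)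
  note assets = assets_cds_system[of r, unfolded r_values(1,2), OF t(1,2) t(1,2)]
  show ?sol
    using t clearing_condition_iff_min[of "4 - 3 * t" a t]
    unfolding solution_def cds_system_simps(1) ball_simps r_values(1-3) assets bank_liab_cds_system
    by (simp add: r_values(4)) (smt (verit) mult_nonneg_nonneg t(1,2))
qed

lemma solution_cds_system_full_recovery:
  "1 \<le> a \<Longrightarrow> solution (cds_system a) (cds_recovery 1)"
  unfolding solution_cds_system_iff by (rule exI[of _ 1]) simp

lemma solutions_cds_system_critical:
  "{r. solution (cds_system (4/3)) r} = {cds_recovery 1, cds_recovery (2/3)}"
proof (intro equalityI subsetI)
  fix r
  assume "r \<in> {r. solution (cds_system (4/3)) r}"
  then obtain t where "0 \<le> t" "t \<le> 1" "t = min 1 ((4/3) / (4 - 3 * t))" "r = cds_recovery t"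
    by (auto simp: solution_cds_system_iff)
  moreover from this(1-3) have "t = 1 \<or> t = 2/3"
    using cds_recovery_fixed_point_iff[of t "4/3"] by auto
  ultimately show "r \<in> {cds_recovery 1, cds_recovery (2/3)}"
    by blast
next
  have "solution (cds_system (4/3)) (cds_recovery (2/3))"
    unfolding solution_cds_system_iff by (rule exI[of _ "2/3"]) simp
  then show "r \<in> {r. solution (cds_system (4/3)) r}" if "r \<in> {cds_recovery 1, cds_recovery (2/3)}" for r
    using that solution_cds_system_full_recovery[of "4/3"] by auto
qed

lemma solutions_cds_system_above_critical:
  "{r. solution (cds_system (7/3)) r} = {cds_recovery 1}"
proof (intro equalityI subsetI)
  fix r
  assume "r \<in> {r. solution (cds_system (7/3)) r}"
  then obtain t where "0 \<le> t" "t \<le> 1" "t = min 1 ((7/3) / (4 - 3 * t))" "r = cds_recovery t"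
    by (auto simp: solution_cds_system_iff)
  then show "r \<in> {cds_recovery 1}"
    using cds_recovery_fixed_point_iff[of t "7/3"] zero_le_power2[of "t - 2/3"] by auto
qed (simp add: solution_cds_system_full_recovery)

lemma payoff_cds_system:
  assumes "0 \<le> t" "t \<le> 1"
  shows "payoff (cds_system a) (cds_recovery t) 0 = max (a - (4 - 3 * t)) 0"
  using assets_cds_system(1)[of "cds_recovery t"] assms
  by (simp add: payoff_def bank_liab_cds_system cds_recovery_def)

theorem mainTheorem6:
  shows "\<exists>S v (x::real). base_model S \<and> v \<in> banks S \<and> x > 0 \<and>
    (\<exists>r1 r2. r1 \<noteq> r2 \<and> {r. solution S r} = {r1, r2} \<and> payoff S r2 v = 0 \<and>
      (let S' = S\<lparr>ext := (ext S)(v := ext S v + x)\<rparr> in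
        {r. solution S' r} = {r1} \<and> payoff S' r1 v > x))"
proof (intro exI conjI)
  show "base_model (cds_system (4/3))"
    by (simp add: base_model_cds_system)
  show "(0::nat) \<in> banks (cds_system (4/3))" and "(1::real) > 0"
    by (simp_all add: cds_system_simps)
  show "cds_recovery 1 \<noteq> cds_recovery (2/3)"
    by (auto simp: fun_eq_iff cds_recovery_def)
  show "{r. solution (cds_system (4/3)) r} = {cds_recovery 1, cds_recovery (2/3)}"
    by (rule solutions_cds_system_critical)
  show "payoff (cds_system (4/3)) (cds_recovery (2/3)) 0 = 0"
    by (simp add: payoff_cds_system)
  show "let S' = (cds_system (4/3))\<lparr>ext := (ext (cds_system (4/3)))(0 := ext (cds_system (4/3)) 0 + 1)\<rparr>
    in {r. solution S' r} = {cds_recovery 1} \<and> payoff S' (cds_recovery 1) 0 > 1"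
    by (simp add: ext_update_cds_system solutions_cds_system_above_critical payoff_cds_system)
qed
end
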